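(* Let $n\ge 1$ and let $p\in\mathbb{P}^n$ be a word with no immediate repetitions. Then $p$ or $p^{+1}$ occurs as a subsequence of the first $n$ runs of the infinite zigzag word.
   Context: $\mathbb{P}$ denotes the positive integers; a word over $\mathbb{P}$ is a finite sequence of positive integers, $\mathbb{P}^n$ is the set of such words of length $n$, and $p(i)$ denotes the $i$th letter of $p$. The word $p^{+1}$ is defined by $p^{+1}(i)=p(i)+1$ for all $i$. A word $p$ has an immediate repetition if $p(i)=p(i+1)$ for some index $i$. The infinite zigzag word is the concatenation $R_1R_2R_3\cdots$ of runs, where each odd-indexed run $R_k$ is the ascending sequence $1,3,5,7,\dots$ of all odd positive integers and each even-indexed run $R_k$ is the descending sequence $\dots,8,6,4,2$ of all even positive integers. A word $p$ occurs as a subsequence of the first $m$ runs of the infinite zigzag word if $p$ can be written as a concatenation $p=q_1q_2\cdots q_m$ of (possibly empty) words such that for each odd $k$, $q_k$ is a strictly increasing sequence of odd integers, and for each even $k$, $q_k$ is a strictly decreasing sequence of even integers. *)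

theory Defs
  imports Main
begin

definition positive_word :: "nat list \<Rightarrow> bool" where
  "positive_word p \<longleftrightarrow> (\<forall>x\<in>set p. x \<ge> 1)"

definition shift_word :: "nat list \<Rightarrow> nat list" where
  "shift_word p = map (\<lambda>x. x + 1) p"

definition has_immediate_repetition :: "nat list \<Rightarrow> bool" where
  "has_immediate_repetition p \<longleftrightarrow> (\<exists>i. i + 1 < length p \<and> p ! i = p ! (i + 1))"

text \<open>Run k (1-indexed) of the zigzag word: odd k = ascending odd numbers,
  even k = descending even numbers. A piece q_k fits run k.\<close>
definition fits_run :: "nat \<Rightarrow> nat list \<Rightarrow> bool" where
  "fits_run k q \<longleftrightarrow>
     (if odd k then sorted_wrt (<) q \<and> (\<forall>x\<in>set q. odd x)
      else sorted_wrt (>) q \<and> (\<forall>x\<in>set q. even x \<and> x > 0))"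

definition occurs_in_zigzag_runs :: "nat \<Rightarrow> nat list \<Rightarrow> bool" where
  "occurs_in_zigzag_runs m p \<longleftrightarrow>
     (\<exists>qs :: nat list list. length qs = m \<and> concat qs = p \<and>
        (\<forall>k\<in>{1..m}. fits_run k (qs ! (k - 1))))"

end

theory Submission
  imports Defs
begin

text \<open>Place the letters greedily: each letter goes into the earliest run that can still take it.
  After a letter \<open>x\<close> in a run, the next letter \<open>y\<close> stays in that run if it continues its
  monotone parity pattern, moves to the next run if its parity differs, and otherwise must skip
  one run. For \<open>y \<noteq> x\<close> the cases "stay" and "skip" swap under the shift \<open>p \<mapsto> p\<^sup>+\<^sup>1\<close>, while a
  parity change stays a parity change, so the advances of \<open>p\<close> and \<open>p\<^sup>+\<^sup>1\<close> sum to \<open>2(n - 1)\<close>.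
  As \<open>p\<close> and \<open>p\<^sup>+\<^sup>1\<close> start in runs 1 and 2 in some order, one of them ends in run \<open>n\<close> or earlier.\<close>

definition run_advance :: "nat \<Rightarrow> nat \<Rightarrow> nat" where
  "run_advance x y =
     (if odd x \<noteq> odd y then 1
      else if (odd x \<and> x < y) \<or> (even x \<and> y < x) then 0 else 2)"

fun total_advance :: "nat list \<Rightarrow> nat" where
  "total_advance (x # y # r) = run_advance x y + total_advance (y # r)"
| "total_advance _ = 0"

definition start_run :: "nat \<Rightarrow> nat" where
  "start_run x = (if odd x then 1 else 2)"

definition fits_runs_from :: "nat \<Rightarrow> nat list list \<Rightarrow> bool" where
  "fits_runs_from s qs \<longleftrightarrow> (\<forall>j<length qs. fits_run (s + j) (qs ! j))"

lemma has_immediate_repetition_Cons_Cons: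
  "has_immediate_repetition (x # y # r) \<longleftrightarrow> x = y \<or> has_immediate_repetition (y # r)"
proof
  assume "has_immediate_repetition (x # y # r)"
  then obtain i where "i + 1 < length (x # y # r)" "(x # y # r) ! i = (x # y # r) ! (i + 1)"
    unfolding has_immediate_repetition_def by blast
  then show "x = y \<or> has_immediate_repetition (y # r)"
    unfolding has_immediate_repetition_def by (cases i) auto
next
  assume "x = y \<or> has_immediate_repetition (y # r)"
  then show "has_immediate_repetition (x # y # r)"
  proof
    assume "x = y"
    then show ?thesis
      unfolding has_immediate_repetition_def by (intro exI[of _ 0]) simp
  next
    assume "has_immediate_repetition (y # r)"
    then obtain i where "i + 1 < length (y # r)" "(y # r) ! i = (y # r) ! (i + 1)"
      unfolding has_immediate_repetition_def by blast
    then show ?thesis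
      unfolding has_immediate_repetition_def by (intro exI[of _ "Suc i"]) simp
  qed
qed

lemma run_advance_eq_0_iff:
  "run_advance x y = 0 \<longleftrightarrow> odd x = odd y \<and> (if odd x then x < y else y < x)"
  by (simp add: run_advance_def)

lemma odd_run_advance_iff: "x \<noteq> y \<Longrightarrow> odd (run_advance x y) \<longleftrightarrow> odd x \<noteq> odd y"
  by (simp add: run_advance_def)

lemma run_advance_shift: "x \<noteq> y \<Longrightarrow> run_advance x y + run_advance (x + 1) (y + 1) = 2"
  by (auto simp: run_advance_def)

lemma total_advance_shift:
  "\<not> has_immediate_repetition p \<Longrightarrow>
   total_advance p + total_advance (shift_word p) = 2 * (length p - 1)"
proof (induction p rule: total_advance.induct)
  case (1 x y r)
  then have "x \<noteq> y" and "\<not> has_immediate_repetition (y # r)"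
    by (simp_all add: has_immediate_repetition_Cons_Cons)
  with 1 run_advance_shift[of x y] show ?case
    by (simp add: shift_word_def)
qed (auto simp: shift_word_def)

lemma start_run_shift: "start_run x + start_run (x + 1) = 3"
  by (simp add: start_run_def)

lemma fits_run_Nil: "fits_run k []"
  by (simp add: fits_run_def)

lemma fits_run_singleton: "x > 0 \<Longrightarrow> odd k = odd x \<Longrightarrow> fits_run k [x]"
  by (auto simp: fits_run_def)

lemma fits_run_Cons_Cons:
  assumes fits: "fits_run k (y # t)" and "odd k = odd x" "run_advance x y = 0" "x > 0"
  shows "fits_run k (x # y # t)"
proof (cases "odd k")
  case True
  with fits have "sorted_wrt (<) (y # t)" "\<forall>z\<in>set (y # t). odd z"
    by (simp_all add: fits_run_def)
  moreover have "x < y" "odd x"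
    using True assms(2,3) by (simp_all add: run_advance_eq_0_iff)
  ultimately show ?thesis
    using True by (auto simp: fits_run_def intro: less_trans)
next
  case False
  with fits have "sorted_wrt (>) (y # t)" "\<forall>z\<in>set (y # t). even z \<and> z > 0"
    by (simp_all add: fits_run_def)
  moreover have "y < x" "even x"
    using False assms(2,3) by (simp_all add: run_advance_eq_0_iff)
  ultimately show ?thesis
    using False \<open>x > 0\<close> by (auto simp: fits_run_def intro: less_trans)
qed

lemma fits_runs_from_Cons:
  "fits_runs_from s (q # qs) \<longleftrightarrow> fits_run s q \<and> fits_runs_from (Suc s) qs"
  by (auto simp: fits_runs_from_def less_Suc_eq_0_disj)

lemma fits_runs_from_replicate_Nil_append:
  "fits_runs_from (s + k) qs \<Longrightarrow> fits_runs_from s (replicate k [] @ qs)"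
  by (induction k arbitrary: s) (simp_all add: fits_runs_from_Cons fits_run_Nil)

lemma fits_runs_from_append_replicate_Nil:
  "fits_runs_from s qs \<Longrightarrow> fits_runs_from s (qs @ replicate k [])"
  by (auto simp: fits_runs_from_def nth_append fits_run_Nil)

lemma occurs_in_zigzag_runs_iff:
  "occurs_in_zigzag_runs m p \<longleftrightarrow>
   (\<exists>qs. length qs = m \<and> concat qs = p \<and> fits_runs_from 1 qs)"
proof -
  have "(\<forall>k\<in>{1..m}. fits_run k (qs ! (k - 1))) \<longleftrightarrow> fits_runs_from 1 qs"
    if "length qs = m" for qs :: "nat list list"
  proof
    assume "\<forall>k\<in>{1..m}. fits_run k (qs ! (k - 1))"
    show "fits_runs_from 1 qs"
      unfolding fits_runs_from_def
    proof (intro allI impI)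
      fix j assume "j < length qs"
      then have "1 + j \<in> {1..m}"
        using that by simp
      with \<open>\<forall>k\<in>{1..m}. fits_run k (qs ! (k - 1))\<close> show "fits_run (1 + j) (qs ! j)"
        by fastforce
    qed
  next
    assume "fits_runs_from 1 qs"
    show "\<forall>k\<in>{1..m}. fits_run k (qs ! (k - 1))"
    proof
      fix k assume "k \<in> {1..m}"
      then have "k - 1 < length qs" "1 + (k - 1) = k"
        using that by auto
      with \<open>fits_runs_from 1 qs\<close> show "fits_run k (qs ! (k - 1))"
        unfolding fits_runs_from_def by metis
    qed
  qed
  then show ?thesis
    unfolding occurs_in_zigzag_runs_def by blast
qed

lemma greedy_embedding:
  assumes "positive_word (x # r)" "\<not> has_immediate_repetition (x # r)" "odd s = odd x"
  shows "\<exists>t qs. length qs = total_advance (x # r) \<and> concat ((x # t) # qs) = x # r \<and>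
           fits_runs_from s ((x # t) # qs)"
  using assms
proof (induction r arbitrary: x s)
  case Nil
  then have "fits_run s [x]"
    by (intro fits_run_singleton) (auto simp: positive_word_def)
  then show ?case
    by (auto simp: fits_runs_from_def)
next
  case (Cons y r)
  let ?a = "run_advance x y"
  have "x \<noteq> y" and no_rep: "\<not> has_immediate_repetition (y # r)"
    using Cons.prems(2) by (simp_all add: has_immediate_repetition_Cons_Cons)
  have pos: "positive_word (y # r)" and "x > 0"
    using Cons.prems(1) by (auto simp: positive_word_def)
  have "odd (s + ?a) = odd y"
    using Cons.prems(3) odd_run_advance_iff[OF \<open>x \<noteq> y\<close>] by auto
  then obtain t qs where len: "length qs = total_advance (y # r)"
      and cat: "concat ((y # t) # qs) = y # r" and fits: "fits_runs_from (s + ?a) ((y # t) # qs)"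
    using Cons.IH[OF pos no_rep] by blast
  show ?case
  proof (cases "?a = 0")
    case True
    then have "fits_runs_from s ((x # y # t) # qs)"
      using fits Cons.prems(3) \<open>x > 0\<close> by (simp add: fits_runs_from_Cons fits_run_Cons_Cons)
    with True len cat show ?thesis
      by (intro exI[of _ "y # t"] exI[of _ qs]) simp
  next
    case False
    let ?qs = "replicate (?a - 1) [] @ (y # t) # qs"
    from False have "fits_runs_from (Suc s) ?qs"
      using fits by (intro fits_runs_from_replicate_Nil_append) simp
    moreover have "fits_run s [x]"
      using Cons.prems(3) \<open>x > 0\<close> by (rule fits_run_singleton[rotated])
    ultimately have "fits_runs_from s ([x] # ?qs)"
      by (simp add: fits_runs_from_Cons)
    with False len cat show ?thesis
      by (intro exI[of _ "[]"] exI[of _ ?qs]) simp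
  qed
qed

lemma occurs_in_zigzag_runs_if_total_advance_le:
  assumes "positive_word (x # r)" "\<not> has_immediate_repetition (x # r)"
    and "start_run x + total_advance (x # r) \<le> m"
  shows "occurs_in_zigzag_runs m (x # r)"
proof -
  let ?s = "start_run x"
  have "odd (1 + (?s - 1)) = odd x"
    by (simp add: start_run_def)
  then obtain t qs where len: "length qs = total_advance (x # r)"
      and cat: "concat ((x # t) # qs) = x # r" and fits: "fits_runs_from (1 + (?s - 1)) ((x # t) # qs)"
    using greedy_embedding[OF assms(1,2)] by blast
  let ?k = "m - ?s - total_advance (x # r)"
  let ?qs = "replicate (?s - 1) [] @ ((x # t) # qs) @ replicate ?k []"
  have "fits_runs_from 1 ?qs"
    using fits by (intro fits_runs_from_replicate_Nil_append fits_runs_from_append_replicate_Nil)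
  moreover have "length ?qs = m"
    using len assms(3) by (auto simp: start_run_def split: if_split_asm)
  moreover have "concat ?qs = x # r"
    using cat by simp
  ultimately show ?thesis
    unfolding occurs_in_zigzag_runs_iff by blast
qed

theorem proposition5p2:
  fixes n :: nat and p :: "nat list"
  assumes "n \<ge> 1"
    and "length p = n"
    and "positive_word p"
    and "\<not> has_immediate_repetition p"
  shows "occurs_in_zigzag_runs n p \<or> occurs_in_zigzag_runs n (shift_word p)"
proof -
  obtain x r where p: "p = x # r"
    using assms(1,2) by (cases p) auto
  have shift_p: "shift_word (x # r) = (x + 1) # map (\<lambda>x. x + 1) r"
    by (simp add: shift_word_def)
  have "positive_word (shift_word p)" "\<not> has_immediate_repetition (shift_word p)"
    using assms(4) by (auto simp: positive_word_def shift_word_def has_immediate_repetition_def)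
  moreover have "(start_run x + total_advance p) + (start_run (x + 1) + total_advance (shift_word p))
      = 2 * n + 1"
    using total_advance_shift[OF assms(4)] start_run_shift[of x] assms(1,2) by simp
  then have "start_run x + total_advance p \<le> n \<or>
      start_run (x + 1) + total_advance (shift_word p) \<le> n"
    by linarith
  ultimately show ?thesis
    using occurs_in_zigzag_runs_if_total_advance_le[of x r n]
      occurs_in_zigzag_runs_if_total_advance_le[of "x + 1" "map (\<lambda>x. x + 1) r" n]
      assms(3,4)
    unfolding p shift_p by blast
qed

end
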